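(* Let $n\ge 4$, let $\lambda=(\lambda_1,\lambda_2)$ with integers $\lambda_1\ge\lambda_2\ge 0$, and let $(\lambda,i,j,k)$ be admissible. For fixed $w \in W$, the expression $\langle w, \psi_{\lambda,(i,j,k)}(\{x_1,\dots,x_i\})(\gamma)\rangle$ is a polynomial in the entries of the orthogonal matrix $\gamma \in \mathrm{O}(n)$ and of the vectors $x_1,\dots,x_i$.
   Context: Setting. Fix an angle $\theta$ and consider the graph on $S^{n-1}$ in which distinct $x,y$ are adjacent if $\langle x,y\rangle > \cos\theta$; $\mathcal{I}_2$ is the set of independent sets of this graph of cardinality at most $2$, and $\mathcal{I}_{=i}$ those of cardinality exactly $i$. $\mathrm{O}(n,\mathbb{C})$ denotes complex $n\times n$ matrices $g$ with $g^{\sf T}g = I$, $\mathrm{O}(n)$ the real ones. Let $U=\mathbb{C}^2$ with basis $e_1,e_2$, $m = \lambda_1-\lambda_2$, $W = \mathrm{Sym}^{\lambda_2}(\wedge^2U)\otimes\mathrm{Sym}^m(U)$ with induced action $\rho$ of $2\times 2$ complex matrices, orthonormal basis $w_k = (e_1\wedge e_2)^{\lambda_2}e_1^{m-k}e_2^k$ ($0\le k\le m$), and $c_1(k) = \lambda_2+m-k$, $c_2(k) = \lambda_2+k$. Let $\omega = (I_2\ \ iI_2\ \ 0)$ ($2\times n$) and $\epsilon = \binom{I_2}{0}$ ($n\times 2$); for $w\in W$, $f_w(\gamma) = \rho(\omega\gamma\epsilon)w$ for $\gamma\in \mathrm{O}(n,\mathbb{C})$; $V$ is the span of the right translates $\gamma\mapsto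 f_w(\gamma g)$, $g \in \mathrm{O}(n,\mathbb{C})$, $\pi$ the right-translation representation of $\mathrm{O}(n)$ on $V$, $\Psi(w) = f_w$. For $J = \{x,y\}\in\mathcal{I}_2$ (with $x=y$ if $|J|=1$): $p_j(J) = \langle x,y\rangle^j$, $q_1(J) = \sqrt{2+2\langle x,y\rangle}$, $q_2(J) = \sqrt{2-2\langle x,y\rangle}$; orbit representative $R_J = \{(q_1/2,q_2/2,0,\dots,0),(q_1/2,-q_2/2,0,\dots,0)\}$ for $|J|\ge1$ and $\emptyset$ for $J=\emptyset$; a section is $s\colon\mathcal{I}_2\to\mathrm{O}(n)$ with $s(J)R_J = J$. Admissible tuples: $i=0$: $\lambda=(0,0)$, $j=k=0$; $i=1$: $\lambda_2=0$, $j=k=0$; $i=2$: $j\ge0$, $0\le k\le m$, $\lambda_2+k$ even. Define $\psi_{\lambda,(i,j,k)}(J) = \xi_{\lambda,i,j,k}(J)\pi(s(J))\Psi(w_k)$ with $\xi = 1$ if $i=|J|<2$, $\xi = p_j(J)q_1(J)^{c_1(k)}q_2(J)^{c_2(k)}$ if $i=|J|=2$, and $\xi=0$ otherwise (with $0^0 = 1$); this does not depend on the choice of section. *)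

theory Defs
  imports Complex_Main
begin

text \<open>Conventions: vectors in R^n are functions nat => real, coordinates 0..n-1
(the paper's coordinates 1..n), vanishing at indices >= n. Matrices are
functions nat => nat => 'a, only entries with indices in range are relevant.\<close>

definition rinner :: "nat \<Rightarrow> (nat \<Rightarrow> real) \<Rightarrow> (nat \<Rightarrow> real) \<Rightarrow> real" where
  "rinner n x y = (\<Sum>l<n. x l * y l)"

definition sphere_n :: "nat \<Rightarrow> (nat \<Rightarrow> real) set" where
  "sphere_n n = {x. (\<forall>l\<ge>n. x l = 0) \<and> rinner n x x = 1}"

definition orth :: "nat \<Rightarrow> (nat \<Rightarrow> nat \<Rightarrow> real) \<Rightarrow> bool" where
  "orth n g \<longleftrightarrow> (\<forall>a<n. \<forall>b<n. (\<Sum>l<n. g l a * g l b) = (if a = b then 1 else 0))"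

definition mv :: "nat \<Rightarrow> (nat \<Rightarrow> nat \<Rightarrow> real) \<Rightarrow> (nat \<Rightarrow> real) \<Rightarrow> (nat \<Rightarrow> real)" where
  "mv n g x = (\<lambda>a. if a < n then (\<Sum>l<n. g a l * x l) else 0)"

definition indep :: "real \<Rightarrow> nat \<Rightarrow> (nat \<Rightarrow> real) set \<Rightarrow> bool" where
  "indep \<theta> n J \<longleftrightarrow> J \<subseteq> sphere_n n \<and>
     (\<forall>x\<in>J. \<forall>y\<in>J. x \<noteq> y \<longrightarrow> \<not> (rinner n x y > cos \<theta>))"

definition I2 :: "real \<Rightarrow> nat \<Rightarrow> (nat \<Rightarrow> real) set set" where
  "I2 \<theta> n = {J. indep \<theta> n J \<and> finite J \<and> card J \<le> 2}"

definition Ieq :: "real \<Rightarrow> nat \<Rightarrow> nat \<Rightarrow> (nat \<Rightarrow> real) set set" where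
  "Ieq \<theta> n i = {J. indep \<theta> n J \<and> finite J \<and> card J = i}"

text \<open>For J = {x,y} (x = y if |J| = 1): <x,y>, and the functions p_j, q_1, q_2.\<close>
definition pairip :: "nat \<Rightarrow> (nat \<Rightarrow> real) set \<Rightarrow> real" where
  "pairip n J = (SOME t. \<exists>x y. J = {x, y} \<and> t = rinner n x y)"

definition pfun :: "nat \<Rightarrow> nat \<Rightarrow> (nat \<Rightarrow> real) set \<Rightarrow> real" where
  "pfun n j J = pairip n J ^ j"

definition q1 :: "nat \<Rightarrow> (nat \<Rightarrow> real) set \<Rightarrow> real" where
  "q1 n J = sqrt (2 + 2 * pairip n J)"

definition q2 :: "nat \<Rightarrow> (nat \<Rightarrow> real) set \<Rightarrow> real" where
  "q2 n J = sqrt (2 - 2 * pairip n J)"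

definition RJ :: "nat \<Rightarrow> (nat \<Rightarrow> real) set \<Rightarrow> (nat \<Rightarrow> real) set" where
  "RJ n J = (if J = {} then {} else
     {(\<lambda>l. if l = 0 then q1 n J / 2 else if l = 1 then q2 n J / 2 else 0),
      (\<lambda>l. if l = 0 then q1 n J / 2 else if l = 1 then - q2 n J / 2 else 0)})"

definition is_section :: "real \<Rightarrow> nat \<Rightarrow> ((nat \<Rightarrow> real) set \<Rightarrow> (nat \<Rightarrow> nat \<Rightarrow> real)) \<Rightarrow> bool" where
  "is_section \<theta> n s \<longleftrightarrow> (\<forall>J\<in>I2 \<theta> n. orth n (s J) \<and> mv n (s J) ` RJ n J = J)"

text \<open>The space W = Sym^{l2}(wedge^2 U) (x) Sym^m(U) is identified with C^{m+1} via the
basis w_k = (e1 wedge e2)^{l2} e1^{m-k} e2^k, k = 0..m: a vector is its coefficient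
function nat => complex (coefficients at k > m are irrelevant).\<close>

definition wbasis :: "nat \<Rightarrow> (nat \<Rightarrow> complex)" where
  "wbasis k = (\<lambda>l. if l = k then 1 else 0)"

definition Winner :: "nat \<Rightarrow> (nat \<Rightarrow> complex) \<Rightarrow> (nat \<Rightarrow> complex) \<Rightarrow> complex" where
  "Winner m v u = (\<Sum>l\<le>m. v l * cnj (u l))"

definition det2 :: "(nat \<Rightarrow> nat \<Rightarrow> complex) \<Rightarrow> complex" where
  "det2 A = A 0 0 * A 1 1 - A 0 1 * A 1 0"

text \<open>Coefficient of e1^{m-l} e2^l in (A e1)^{m-k} (A e2)^k, where
A e1 = A00 e1 + A10 e2 and A e2 = A01 e1 + A11 e2.\<close>
definition symcoeff :: "nat \<Rightarrow> (nat \<Rightarrow> nat \<Rightarrow> complex) \<Rightarrow> nat \<Rightarrow> nat \<Rightarrow> complex" where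
  "symcoeff m A k l = (\<Sum>r\<le>l. if r \<le> m - k \<and> l - r \<le> k then
      of_nat ((m - k) choose r) * A 1 0 ^ r * A 0 0 ^ (m - k - r) *
      of_nat (k choose (l - r)) * A 1 1 ^ (l - r) * A 0 1 ^ (k - (l - r))
    else 0)"

text \<open>Induced action rho(A) w_k = det(A)^{l2} (A e1)^{m-k} (A e2)^k, extended linearly.\<close>
definition rho :: "nat \<Rightarrow> nat \<Rightarrow> (nat \<Rightarrow> nat \<Rightarrow> complex) \<Rightarrow> (nat \<Rightarrow> complex) \<Rightarrow> (nat \<Rightarrow> complex)" where
  "rho l2 m A v = (\<lambda>l. if l \<le> m then det2 A ^ l2 * (\<Sum>k\<le>m. v k * symcoeff m A k l) else 0)"

text \<open>omega = (I_2  i I_2  0) (2 x n), epsilon = (I_2 ; 0) (n x 2).\<close>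
definition omega :: "nat \<Rightarrow> nat \<Rightarrow> complex" where
  "omega a b = (if a = 0 then (if b = 0 then 1 else if b = 2 then \<i> else 0)
                else if a = 1 then (if b = 1 then 1 else if b = 3 then \<i> else 0) else 0)"

definition epsilon :: "nat \<Rightarrow> nat \<Rightarrow> complex" where
  "epsilon a b = (if a = b \<and> b < 2 then 1 else 0)"

definition mmul :: "nat \<Rightarrow> (nat \<Rightarrow> nat \<Rightarrow> complex) \<Rightarrow> (nat \<Rightarrow> nat \<Rightarrow> complex) \<Rightarrow> (nat \<Rightarrow> nat \<Rightarrow> complex)" where
  "mmul d A B = (\<lambda>a b. \<Sum>l<d. A a l * B l b)"

definition cmat :: "(nat \<Rightarrow> nat \<Rightarrow> real) \<Rightarrow> (nat \<Rightarrow> nat \<Rightarrow> complex)" where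
  "cmat g = (\<lambda>a b. complex_of_real (g a b))"

definition Psi :: "nat \<Rightarrow> nat \<Rightarrow> nat \<Rightarrow> (nat \<Rightarrow> complex) \<Rightarrow> ((nat \<Rightarrow> nat \<Rightarrow> complex) \<Rightarrow> (nat \<Rightarrow> complex))" where
  "Psi n l2 m v = (\<lambda>\<gamma>. rho l2 m (mmul n (mmul n omega \<gamma>) epsilon) v)"

definition pi_rep :: "nat \<Rightarrow> (nat \<Rightarrow> nat \<Rightarrow> real) \<Rightarrow> ((nat \<Rightarrow> nat \<Rightarrow> complex) \<Rightarrow> 'b) \<Rightarrow> ((nat \<Rightarrow> nat \<Rightarrow> complex) \<Rightarrow> 'b)" where
  "pi_rep n g f = (\<lambda>\<gamma>. f (mmul n \<gamma> (cmat g)))"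

definition admissible :: "nat \<Rightarrow> nat \<Rightarrow> nat \<Rightarrow> nat \<Rightarrow> nat \<Rightarrow> bool" where
  "admissible l1 l2 i j k \<longleftrightarrow>
     (i = 0 \<and> l1 = 0 \<and> l2 = 0 \<and> j = 0 \<and> k = 0) \<or>
     (i = 1 \<and> l2 = 0 \<and> j = 0 \<and> k = 0) \<or>
     (i = 2 \<and> k \<le> l1 - l2 \<and> even (l2 + k))"

definition xi :: "nat \<Rightarrow> nat \<Rightarrow> nat \<Rightarrow> nat \<Rightarrow> nat \<Rightarrow> nat \<Rightarrow> (nat \<Rightarrow> real) set \<Rightarrow> real" where
  "xi n l1 l2 i j k J =
     (if i = card J \<and> i < 2 then 1
      else if i = card J \<and> i = 2 then
        pfun n j J * q1 n J ^ (l2 + (l1 - l2) - k) * q2 n J ^ (l2 + k)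
      else 0)"

definition psi :: "nat \<Rightarrow> ((nat \<Rightarrow> real) set \<Rightarrow> (nat \<Rightarrow> nat \<Rightarrow> real)) \<Rightarrow> nat \<Rightarrow> nat \<Rightarrow> nat \<Rightarrow> nat \<Rightarrow> nat
     \<Rightarrow> (nat \<Rightarrow> real) set \<Rightarrow> (nat \<Rightarrow> nat \<Rightarrow> complex) \<Rightarrow> (nat \<Rightarrow> complex)" where
  "psi n s l1 l2 i j k J = (\<lambda>\<gamma> l. complex_of_real (xi n l1 l2 i j k J) *
       pi_rep n (s J) (Psi n l2 (l1 - l2) (wbasis k)) \<gamma> l)"

inductive_set polyfun :: "'v set \<Rightarrow> (('v \<Rightarrow> real) \<Rightarrow> complex) set" for V where
  pconst: "(\<lambda>_. c) \<in> polyfun V"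
| pvar: "a \<in> V \<Longrightarrow> (\<lambda>v. complex_of_real (v a)) \<in> polyfun V"
| padd: "p \<in> polyfun V \<Longrightarrow> q \<in> polyfun V \<Longrightarrow> (\<lambda>v. p v + q v) \<in> polyfun V"
| pmult: "p \<in> polyfun V \<Longrightarrow> q \<in> polyfun V \<Longrightarrow> (\<lambda>v. p v * q v) \<in> polyfun V"

text \<open>Variables: Inl (a,b) = entry gamma_{ab}, Inr (a,l) = l-th coordinate of x_a.\<close>
definition vars :: "nat \<Rightarrow> nat \<Rightarrow> ((nat \<times> nat) + (nat \<times> nat)) set" where
  "vars n i = {Inl (a, b) | a b. a < n \<and> b < n} \<union> {Inr (a, l) | a l. a < i \<and> l < n}"

definition assign :: "(nat \<Rightarrow> nat \<Rightarrow> real) \<Rightarrow> (nat \<Rightarrow> nat \<Rightarrow> real) \<Rightarrow> ((nat \<times> nat) + (nat \<times> nat)) \<Rightarrow> real" where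
  "assign \<gamma> x v = (case v of Inl (a, b) \<Rightarrow> \<gamma> a b | Inr (a, l) \<Rightarrow> x a l)"

end

theory Submission
  imports Defs
begin

(* The section s(J) maps R_J = {(q1/2, +-q2/2, 0, ...)} onto J = {x0, x1}, so the first two
   columns of g = s(J) are (x0 + x1)/q1 and +-(x0 - x1)/q2.  Right translation by g turns Psi(w_k)
   into gamma |-> rho(omega gamma (g e1, g e2)) w_k, and rho(A) w_k is homogeneous of degree c1(k)
   in the first column of A and of degree c2(k) in the second.  Hence the factor
   xi = p_j q1^c1(k) q2^c2(k) exactly clears the denominators (the sign drops out because c2(k)
   is even), leaving p_j(J) rho(omega gamma (x0 + x1, x0 - x1)) w_k, a polynomial in gamma, x0, x1.
   For |J| = 1 the same computation works with c2(0) = 0, and for J empty psi is constant. *)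

lemma polyfun_cnj: "p \<in> polyfun V \<Longrightarrow> (\<lambda>v. cnj (p v)) \<in> polyfun V"
  by (induction rule: polyfun.induct) (auto intro: polyfun.intros)

lemma polyfun_sum:
  "finite S \<Longrightarrow> (\<And>x. x \<in> S \<Longrightarrow> f x \<in> polyfun V) \<Longrightarrow> (\<lambda>v. \<Sum>x\<in>S. f x v) \<in> polyfun V"
  by (induction S rule: finite_induct) (auto intro: polyfun.intros)

lemma polyfun_power: "p \<in> polyfun V \<Longrightarrow> (\<lambda>v. p v ^ n) \<in> polyfun V"
  by (induction n) (auto intro: polyfun.intros)

lemma polyfun_diff:
  assumes "p \<in> polyfun V" "q \<in> polyfun V"
  shows "(\<lambda>v. p v - q v) \<in> polyfun V"
proof -
  have "(\<lambda>v. p v + (-1) * q v) \<in> polyfun V"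
    by (intro polyfun.intros assms)
  then show ?thesis by simp
qed

lemma polyfun_If:
  "(c \<Longrightarrow> p \<in> polyfun V) \<Longrightarrow> (\<not> c \<Longrightarrow> q \<in> polyfun V) \<Longrightarrow> (\<lambda>v. if c then p v else q v) \<in> polyfun V"
  by (cases c) auto

lemmas polyfun_closed =
  polyfun.pconst polyfun.padd polyfun.pmult polyfun_diff polyfun_power polyfun_cnj polyfun_sum polyfun_If

lemma polyfun_Winner:
  "(\<And>l. (\<lambda>v. F v l) \<in> polyfun V) \<Longrightarrow> (\<lambda>v. Winner m w (F v)) \<in> polyfun V"
  unfolding Winner_def by (intro polyfun_closed) auto

lemma polyfun_rho:
  "(\<And>a b. (\<lambda>v. M v a b) \<in> polyfun V) \<Longrightarrow> (\<lambda>v. rho l2 m (M v) w l) \<in> polyfun V"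
  unfolding rho_def det2_def symcoeff_def by (intro polyfun_closed) auto

lemma rho_cong:
  assumes "\<And>a b. b < 2 \<Longrightarrow> A a b = B a b"
  shows "rho l2 m A = rho l2 m B"
proof -
  have "A 0 0 = B 0 0" "A 0 1 = B 0 1" "A 1 0 = B 1 0" "A 1 1 = B 1 1"
    by (simp_all add: assms)
  then show ?thesis
    unfolding rho_def det2_def symcoeff_def by (simp only:)
qed

lemma rho_wbasis:
  assumes "k \<le> m"
  shows "rho l2 m A (wbasis k) l = (if l \<le> m then det2 A ^ l2 * symcoeff m A k l else 0)"
proof -
  have "(\<Sum>k'\<le>m. wbasis k k' * f k') = f k" for f :: "nat \<Rightarrow> complex"
    using assms by (simp add: wbasis_def if_distrib[of "\<lambda>x. x * _"] cong: if_cong)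
  then show ?thesis
    unfolding rho_def by simp
qed

lemma det2_scale_columns:
  assumes "\<And>a. B a 0 = c * A a 0" "\<And>a. B a 1 = d * A a 1"
  shows "det2 B = c * d * det2 A"
  unfolding det2_def assms by (simp add: algebra_simps)

lemma symcoeff_scale_columns:
  assumes "\<And>a. B a 0 = c * A a 0" "\<And>a. B a 1 = d * A a 1"
  shows "symcoeff m B k l = c ^ (m - k) * d ^ k * symcoeff m A k l"
  unfolding symcoeff_def sum_distrib_left
proof (intro sum.cong refl)
  fix r
  show "(if r \<le> m - k \<and> l - r \<le> k then of_nat (m - k choose r) * B 1 0 ^ r * B 0 0 ^ (m - k - r) *
           of_nat (k choose (l - r)) * B 1 1 ^ (l - r) * B 0 1 ^ (k - (l - r)) else 0) =
        c ^ (m - k) * d ^ k * (if r \<le> m - k \<and> l - r \<le> k then of_nat (m - k choose r) * A 1 0 ^ r * A 0 0 ^ (m - k - r) *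
           of_nat (k choose (l - r)) * A 1 1 ^ (l - r) * A 0 1 ^ (k - (l - r)) else 0)"
  proof (cases "r \<le> m - k \<and> l - r \<le> k")
    case True
    then have "c ^ (m - k) = c ^ r * c ^ (m - k - r)" "d ^ k = d ^ (l - r) * d ^ (k - (l - r))"
      by (simp_all only: le_add_diff_inverse flip: power_add)
    then show ?thesis
      using True unfolding assms by (simp add: power_mult_distrib algebra_simps)
  next
    case False
    then show ?thesis by (simp only: if_False mult_zero_right)
  qed
qed

lemma rho_wbasis_scale_columns:
  assumes "\<And>a. B a 0 = c * A a 0" "\<And>a. B a 1 = d * A a 1" and "k \<le> m"
  shows "rho l2 m B (wbasis k) l = c ^ (l2 + (m - k)) * d ^ (l2 + k) * rho l2 m A (wbasis k) l"
proof -
  have "det2 B = c * d * det2 A" "symcoeff m B k l = c ^ (m - k) * d ^ k * symcoeff m A k l"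
    using det2_scale_columns symcoeff_scale_columns assms(1,2) by blast+
  then show ?thesis
    using assms(3) unfolding power_add by (simp add: rho_wbasis power_mult_distrib algebra_simps)
qed

definition omega_gamma ::
    "nat \<Rightarrow> (nat \<Rightarrow> nat \<Rightarrow> real) \<Rightarrow> (nat \<Rightarrow> real) \<Rightarrow> (nat \<Rightarrow> real) \<Rightarrow> nat \<Rightarrow> nat \<Rightarrow> complex" where
  "omega_gamma n \<gamma> u v a b =
     (\<Sum>t<n. omega a t * (\<Sum>s<n. of_real (\<gamma> t s) * of_real (if b = 0 then u s else v s)))"

lemma omega_gamma_cong:
  assumes "\<And>s. s < n \<Longrightarrow> u s = u' s" "\<And>s. s < n \<Longrightarrow> v s = v' s"
  shows "omega_gamma n \<gamma> u v = omega_gamma n \<gamma> u' v'"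
  unfolding omega_gamma_def by (intro ext) (simp add: assms cong: if_cong)

lemma omega_gamma_scale_columns:
  "omega_gamma n \<gamma> (\<lambda>s. c * u s) (\<lambda>s. d * v s) a 0 = of_real c * omega_gamma n \<gamma> u v a 0"
  "omega_gamma n \<gamma> (\<lambda>s. c * u s) (\<lambda>s. d * v s) a 1 = of_real d * omega_gamma n \<gamma> u v a 1"
  unfolding omega_gamma_def sum_distrib_left by (auto intro!: sum.cong simp: algebra_simps)

lemma pi_rep_Psi:
  assumes "n \<ge> 2"
  shows "pi_rep n g (Psi n l2 m w) (cmat \<gamma>) = rho l2 m (omega_gamma n \<gamma> (\<lambda>s. g s 0) (\<lambda>s. g s 1)) w"
  unfolding pi_rep_def Psi_def
proof (rule rho_cong[THEN fun_cong])
  fix a b :: nat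
  assume "b < 2"
  then have "mmul n (mmul n omega (mmul n (cmat \<gamma>) (cmat g))) epsilon a b
      = mmul n omega (mmul n (cmat \<gamma>) (cmat g)) a b"
    using assms unfolding mmul_def[of n _ epsilon] epsilon_def by (simp add: if_distrib cong: if_cong)
  also have "\<dots> = omega_gamma n \<gamma> (\<lambda>s. g s 0) (\<lambda>s. g s 1) a b"
    using \<open>b < 2\<close> unfolding mmul_def omega_gamma_def cmat_def
    by (intro sum.cong refl arg_cong2[where f = "(*)"]) (auto simp: less_2_cases_iff)
  finally show "mmul n (mmul n omega (mmul n (cmat \<gamma>) (cmat g))) epsilon a b
      = omega_gamma n \<gamma> (\<lambda>s. g s 0) (\<lambda>s. g s 1) a b" .
qed

lemma polyfun_omega_gamma:
  assumes "\<And>s. s < n \<Longrightarrow> (\<lambda>v. complex_of_real (U v s)) \<in> polyfun (vars n i)"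
    and "\<And>s. s < n \<Longrightarrow> (\<lambda>v. complex_of_real (V v s)) \<in> polyfun (vars n i)"
  shows "(\<lambda>v. omega_gamma n (\<lambda>a b. v (Inl (a, b))) (U v) (V v) a b) \<in> polyfun (vars n i)"
  unfolding omega_gamma_def if_distrib[of complex_of_real]
  by (intro polyfun_closed polyfun.pvar assms) (auto simp: vars_def)

lemma rinner_commute: "rinner n x y = rinner n y x"
  unfolding rinner_def by (simp add: mult.commute)

lemma pairip_doubleton: "pairip n {x, y} = rinner n x y"
  unfolding pairip_def
proof (rule some_equality)
  fix t
  assume "\<exists>x' y'. {x, y} = {x', y'} \<and> t = rinner n x' y'"
  then show "t = rinner n x y"
    by (auto simp: doubleton_eq_iff rinner_commute)
qed blast

lemma mv_first_two:
  assumes "n \<ge> 2" "a < n"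
  shows "mv n g (\<lambda>l. if l = 0 then \<alpha> else if l = 1 then \<beta> else 0) a = g a 0 * \<alpha> + g a 1 * \<beta>"
proof -
  have "(\<Sum>l<n. g a l * (if l = 0 then \<alpha> else if l = 1 then \<beta> else 0))
      = (\<Sum>l<n. (if l = 0 then g a 0 * \<alpha> else 0) + (if l = 1 then g a 1 * \<beta> else 0))"
    by (rule sum.cong) auto
  then show ?thesis
    using assms by (simp add: mv_def sum.distrib)
qed

lemma section_columns:
  assumes "n \<ge> 2" and "mv n g ` RJ n {x0, x1} = {x0, x1}"
  obtains \<sigma> :: real where "\<sigma> = 1 \<or> \<sigma> = -1"
    and "\<And>a. a < n \<Longrightarrow> q1 n {x0, x1} * g a 0 = x0 a + x1 a"
    and "\<And>a. a < n \<Longrightarrow> \<sigma> * q2 n {x0, x1} * g a 1 = x0 a - x1 a"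
proof -
  define Q1 Q2 where "Q1 = q1 n {x0, x1}" and "Q2 = q2 n {x0, x1}"
  define rp rm where "rp = (\<lambda>l::nat. if l = 0 then Q1 / 2 else if l = 1 then Q2 / 2 else 0)"
    and "rm = (\<lambda>l::nat. if l = 0 then Q1 / 2 else if l = 1 then - Q2 / 2 else 0)"
  have "RJ n {x0, x1} = {rp, rm}"
    unfolding RJ_def rp_def rm_def Q1_def Q2_def by simp
  have add: "mv n g rp a + mv n g rm a = Q1 * g a 0" and sub: "mv n g rp a - mv n g rm a = Q2 * g a 1"
    if "a < n" for a
    using mv_first_two[OF assms(1) that] unfolding rp_def rm_def by (simp_all add: algebra_simps)
  from assms(2) \<open>RJ n {x0, x1} = {rp, rm}\<close> have "{mv n g rp, mv n g rm} = {x0, x1}"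
    by simp
  then consider "mv n g rp = x0" "mv n g rm = x1" | "mv n g rp = x1" "mv n g rm = x0"
    by (auto simp: doubleton_eq_iff)
  then show thesis
  proof cases
    case 1
    show thesis
      by (rule that[of 1]) (use 1 add sub in \<open>simp_all add: Q1_def Q2_def\<close>)
  next
    case 2
    show thesis
      by (rule that[of "-1"]) (use 2 add sub in \<open>force simp: Q1_def Q2_def\<close>)+
  qed
qed

lemma Ieq_subset_I2: "i \<le> 2 \<Longrightarrow> Ieq \<theta> n i \<subseteq> I2 \<theta> n"
  unfolding Ieq_def I2_def by auto

lemma psi_empty: "psi n s 0 0 0 0 0 {} \<gamma> = wbasis 0"
  by (auto simp: psi_def xi_def pi_rep_def Psi_def rho_def symcoeff_def wbasis_def)

lemma psi_singleton:
  assumes "n \<ge> 2" "is_section \<theta> n s" "{x0} \<in> Ieq \<theta> n 1"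
  shows "psi n s l1 0 1 0 0 {x0} (cmat \<gamma>) = rho 0 l1 (omega_gamma n \<gamma> x0 (\<lambda>_. 0)) (wbasis 0)"
proof -
  define g where "g = s {x0}"
  have "{x0} \<in> I2 \<theta> n"
    using assms(3) Ieq_subset_I2[of 1] by auto
  then have "mv n g ` RJ n {x0, x0} = {x0, x0}" and "rinner n x0 x0 = 1"
    using assms(2) unfolding is_section_def g_def I2_def indep_def sphere_n_def by auto
  then obtain \<sigma> where "\<And>a. a < n \<Longrightarrow> q1 n {x0, x0} * g a 0 = x0 a + x0 a"
    using section_columns[OF assms(1)] by blast
  moreover have "q1 n {x0, x0} = 2"
    using \<open>rinner n x0 x0 = 1\<close> pairip_doubleton[of n x0 x0] by (simp add: q1_def)
  ultimately have A_eq: "omega_gamma n \<gamma> x0 (\<lambda>_. 0) = omega_gamma n \<gamma> (\<lambda>s. 1 * g s 0) (\<lambda>s. 0 * g s 1)"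
    by (intro omega_gamma_cong) auto
  \<comment> \<open>rho(A) w_0 has degree 0 in the second column of A, which may therefore be replaced by 0\<close>
  have "rho 0 l1 (omega_gamma n \<gamma> (\<lambda>s. 1 * g s 0) (\<lambda>s. 0 * g s 1)) (wbasis 0) l
      = of_real 1 ^ (0 + (l1 - 0)) * of_real 0 ^ (0 + 0) * rho 0 l1 (omega_gamma n \<gamma> (\<lambda>s. g s 0) (\<lambda>s. g s 1)) (wbasis 0) l"
    for l by (rule rho_wbasis_scale_columns) (simp_all only: omega_gamma_scale_columns)
  then have "rho 0 l1 (omega_gamma n \<gamma> x0 (\<lambda>_. 0)) (wbasis 0)
      = rho 0 l1 (omega_gamma n \<gamma> (\<lambda>s. g s 0) (\<lambda>s. g s 1)) (wbasis 0)"
    unfolding A_eq by auto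
  moreover have "xi n l1 0 1 0 0 {x0} = 1"
    by (simp add: xi_def)
  ultimately show ?thesis
    by (auto simp: psi_def pi_rep_Psi[OF assms(1)] g_def)
qed

lemma psi_pair:
  assumes "n \<ge> 2" "is_section \<theta> n s" "{x0, x1} \<in> Ieq \<theta> n 2" "k \<le> l1 - l2" "even (l2 + k)"
  shows "psi n s l1 l2 2 j k {x0, x1} (cmat \<gamma>) = (\<lambda>l. of_real (rinner n x0 x1 ^ j) *
           rho l2 (l1 - l2) (omega_gamma n \<gamma> (\<lambda>s. x0 s + x1 s) (\<lambda>s. x0 s - x1 s)) (wbasis k) l)"
proof -
  define m J g where "m = l1 - l2" and "J = {x0, x1}" and "g = s J"
  define A where "A = omega_gamma n \<gamma> (\<lambda>s. g s 0) (\<lambda>s. g s 1)"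
  have "J \<in> I2 \<theta> n" "card J = 2"
    using assms(3) Ieq_subset_I2[of 2] unfolding J_def Ieq_def by auto
  then have "mv n g ` RJ n J = J"
    using assms(2) unfolding is_section_def g_def by blast
  then obtain \<sigma> where \<sigma>: "\<sigma> = 1 \<or> \<sigma> = -1"
    and "\<And>a. a < n \<Longrightarrow> q1 n J * g a 0 = x0 a + x1 a"
    and "\<And>a. a < n \<Longrightarrow> \<sigma> * q2 n J * g a 1 = x0 a - x1 a"
    using section_columns[OF assms(1)] unfolding J_def by blast
  then have A_scaled: "omega_gamma n \<gamma> (\<lambda>s. x0 s + x1 s) (\<lambda>s. x0 s - x1 s)
      = omega_gamma n \<gamma> (\<lambda>s. q1 n J * g s 0) (\<lambda>s. (\<sigma> * q2 n J) * g s 1)"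
    by (intro omega_gamma_cong) auto
  have sign: "complex_of_real \<sigma> ^ (l2 + k) = 1"
    using \<sigma> assms(5) by auto
  have "l2 + (l1 - l2) - k = l2 + (m - k)"
    using assms(4) unfolding m_def by arith
  then have xi: "xi n l1 l2 2 j k J = rinner n x0 x1 ^ j * q1 n J ^ (l2 + (m - k)) * q2 n J ^ (l2 + k)"
    using \<open>card J = 2\<close> unfolding xi_def pfun_def J_def by (simp add: pairip_doubleton)
  have "psi n s l1 l2 2 j k J (cmat \<gamma>) l = of_real (rinner n x0 x1 ^ j) *
      (of_real (q1 n J) ^ (l2 + (m - k)) * of_real (\<sigma> * q2 n J) ^ (l2 + k) * rho l2 m A (wbasis k) l)" for l
    unfolding psi_def pi_rep_Psi[OF assms(1)] m_def[symmetric] g_def[symmetric] A_def[symmetric] using xi sign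
    by (simp add: power_mult_distrib)
  also have "\<dots> l = of_real (rinner n x0 x1 ^ j) *
      rho l2 m (omega_gamma n \<gamma> (\<lambda>s. x0 s + x1 s) (\<lambda>s. x0 s - x1 s)) (wbasis k) l" for l
    unfolding A_scaled A_def using assms(4) m_def
    by (subst rho_wbasis_scale_columns) (simp_all only: omega_gamma_scale_columns)
  finally show ?thesis
    unfolding J_def m_def by (rule ext)
qed

lemma polyfun_coordinate: "a < i \<Longrightarrow> l < n \<Longrightarrow> (\<lambda>v. complex_of_real (v (Inr (a, l)))) \<in> polyfun (vars n i)"
  by (rule polyfun.pvar) (simp add: vars_def)

lemma polyfun_psi_singleton_rhs:
  "(\<lambda>v. Winner l1 w (rho 0 l1 (omega_gamma n (\<lambda>a b. v (Inl (a, b))) (\<lambda>l. v (Inr (0, l))) (\<lambda>_. 0)) (wbasis 0)))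
     \<in> polyfun (vars n 1)"
  by (intro polyfun_Winner polyfun_rho polyfun_omega_gamma polyfun_coordinate polyfun.pconst) auto

lemma polyfun_psi_pair_rhs:
  "(\<lambda>v. Winner m w (\<lambda>l. of_real (rinner n (\<lambda>l. v (Inr (0, l))) (\<lambda>l. v (Inr (1, l))) ^ j) *
      rho l2 m (omega_gamma n (\<lambda>a b. v (Inl (a, b)))
        (\<lambda>l. v (Inr (0, l)) + v (Inr (1, l))) (\<lambda>l. v (Inr (0, l)) - v (Inr (1, l)))) (wbasis k) l))
     \<in> polyfun (vars n 2)"
  unfolding rinner_def of_real_power of_real_sum of_real_mult
  by (intro polyfun_Winner polyfun_rho polyfun_omega_gamma polyfun_closed polyfun_coordinate)
    (auto intro!: polyfun.padd polyfun_diff polyfun_coordinate)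

theorem mainTheorem6:
  fixes \<theta> :: real and n l1 l2 i j k :: nat
    and s :: "(nat \<Rightarrow> real) set \<Rightarrow> (nat \<Rightarrow> nat \<Rightarrow> real)"
    and w :: "nat \<Rightarrow> complex"
  assumes "n \<ge> 4" and "l2 \<le> l1" and "admissible l1 l2 i j k"
    and "is_section \<theta> n s"
  shows "\<exists>P \<in> polyfun (vars n i).
           \<forall>\<gamma> (x :: nat \<Rightarrow> nat \<Rightarrow> real). orth n \<gamma> \<longrightarrow> x ` {..<i} \<in> Ieq \<theta> n i \<longrightarrow>
             Winner (l1 - l2) w (psi n s l1 l2 i j k (x ` {..<i}) (cmat \<gamma>)) = P (assign \<gamma> x)"
proof -
  have n2: "n \<ge> 2"
    using assms(1) by simp
  from assms(3) consider (empty) "i = 0" "l1 = 0" "l2 = 0" "j = 0" "k = 0"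
    | (singleton) "i = 1" "l2 = 0" "j = 0" "k = 0" | (pair) "i = 2" "k \<le> l1 - l2" "even (l2 + k)"
    unfolding admissible_def by blast
  then show ?thesis
  proof cases
    case empty
    then show ?thesis
      by (intro bexI[of _ "\<lambda>_. w 0"]) (auto simp: psi_empty Winner_def wbasis_def intro: polyfun.pconst)
  next
    case singleton
    have "x ` {..<1} = {x 0}" for x :: "nat \<Rightarrow> nat \<Rightarrow> real"
      by (simp add: lessThan_Suc)
    then show ?thesis
      using singleton psi_singleton[OF n2 assms(4)] unfolding singleton(1)
      by (intro bexI[OF _ polyfun_psi_singleton_rhs]) (auto simp: assign_def)
  next
    case pair
    have "x ` {..<2} = {x 0, x 1}" for x :: "nat \<Rightarrow> nat \<Rightarrow> real"
      by (auto simp: lessThan_Suc numeral_2_eq_2)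
    then show ?thesis
      using pair psi_pair[OF n2 assms(4)] unfolding pair(1)
      by (intro bexI[OF _ polyfun_psi_pair_rhs]) (auto simp: assign_def)
  qed
qed

end
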